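(* If for some $u$ and some $i\in\{1,2,3\}$ the cusp $P_i'$ lies on $\mathcal{E}$, then $P_i'=P_i$, and this point is one of the four points $\frac{1}{\sqrt{a^2+b^2}}\left(\pm a^2,\pm b^2\right)$.
   Context: Let $a>b>0$ and $c>0$ with $c^2=a^2-b^2$. Let $\mathcal{E}$ be the ellipse $x^2/a^2+y^2/b^2=1$, parametrized by $P(t)=(a\cos t,b\sin t)$. For $u\in\mathbb{R}$ let $M=(a\cos u,b\sin u)$ and $\Delta_u(t)=(x_u(t),y_u(t))$, where $x_u(t)=\frac1a\big(c^2(1+\cos(t+u))\cos t-a^2\cos u\big)$ and $y_u(t)=\frac1b\big(c^2\cos t\sin(t+u)-c^2\sin t-a^2\sin u\big)$ (the negative pedal curve of $\mathcal{E}$ with respect to $M$). For $i=1,2,3$ let $t_i=-u/3-2\pi(i-1)/3$, $P_i=P(t_i)$, and $P_i'=\Delta_u(t_i)$ (the cusps). *)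

theory Defs
  imports Complex_Main
begin

definition ellipse :: "real \<Rightarrow> real \<Rightarrow> (real \<times> real) set" where
  "ellipse a b = {(x, y). x\<^sup>2 / a\<^sup>2 + y\<^sup>2 / b\<^sup>2 = 1}"

definition ellP :: "real \<Rightarrow> real \<Rightarrow> real \<Rightarrow> real \<times> real" where
  "ellP a b t = (a * cos t, b * sin t)"

text \<open>Negative pedal curve Delta_u(t) of the ellipse with respect to M = P(u), with c^2 = a^2 - b^2.\<close>
definition neg_pedal :: "real \<Rightarrow> real \<Rightarrow> real \<Rightarrow> real \<Rightarrow> real \<Rightarrow> real \<times> real" where
  "neg_pedal a b c u t =
     ((1 / a) * (c\<^sup>2 * (1 + cos (t + u)) * cos t - a\<^sup>2 * cos u),
      (1 / b) * (c\<^sup>2 * cos t * sin (t + u) - c\<^sup>2 * sin t - a\<^sup>2 * sin u))"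

definition cusp_param :: "real \<Rightarrow> nat \<Rightarrow> real" where
  "cusp_param u i = - u / 3 - 2 * pi * (real i - 1) / 3"

end

theory Submission
  imports Defs
begin

text \<open>At a cusp u = -3t (mod 2 pi), so both coordinates of the negative pedal curve are
  cubic in cos t and sin t. On the unit circle the defect of the ellipse equation at such a
  point is a perfect cube, a multiple of ((a^2 + b^2) cos^2 t - a^2)^3. Hence a cusp on the
  ellipse has cos t = +-a / sqrt(a^2 + b^2), sin t = +-b / sqrt(a^2 + b^2), and for these values
  the cusp formula reduces to P(t).\<close>

lemma sin_treble_sin: "sin (3 * x) = 3 * sin x - 4 * sin x ^ 3" for x :: real
proof -
  have "sin (3 * x) = sin (2 * x + x)" by simp
  also have "\<dots> = sin x * (3 * (cos x)\<^sup>2 - (sin x)\<^sup>2)"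
    unfolding sin_add sin_double cos_double by (simp add: algebra_simps power2_eq_square)
  also have "\<dots> = 3 * sin x - 4 * sin x ^ 3"
    unfolding cos_squared_eq by (simp add: algebra_simps power2_eq_square power3_eq_cube)
  finally show ?thesis .
qed

lemma cusp_param_relation: "u = 2 * pi * of_int (1 - int i) - 3 * cusp_param u i"
  by (simp add: cusp_param_def field_simps)

lemma neg_pedal_at_cusp:
  assumes "c\<^sup>2 = a\<^sup>2 - b\<^sup>2" and "u = 2 * pi * of_int n - 3 * t"
  shows "neg_pedal a b c u t =
    (cos t * (3 * a\<^sup>2 - 2 * (a\<^sup>2 + b\<^sup>2) * (cos t)\<^sup>2) / a,
     sin t * (3 * b\<^sup>2 - 2 * (a\<^sup>2 + b\<^sup>2) * (sin t)\<^sup>2) / b)"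
proof -
  have cos_u: "cos u = cos (3 * t)" and sin_u: "sin u = - sin (3 * t)"
    using assms(2) by (simp_all add: cos_diff sin_diff)
  have t_u: "t + u = 2 * pi * of_int n - 2 * t"
    using assms(2) by simp
  have cos_tu: "cos (t + u) = cos (2 * t)" and sin_tu: "sin (t + u) = - sin (2 * t)"
    unfolding t_u by (simp_all add: cos_diff sin_diff)
  have "c\<^sup>2 * (1 + cos (t + u)) * cos t - a\<^sup>2 * cos u
      = cos t * (3 * a\<^sup>2 - 2 * (a\<^sup>2 + b\<^sup>2) * (cos t)\<^sup>2)"
    unfolding cos_u cos_tu assms(1) cos_treble_cos cos_double_cos
    by (simp add: algebra_simps power2_eq_square power3_eq_cube)
  moreover have "c\<^sup>2 * cos t * sin (t + u) - c\<^sup>2 * sin t - a\<^sup>2 * sin u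
      = sin t * (3 * b\<^sup>2 - 2 * (a\<^sup>2 + b\<^sup>2) * (sin t)\<^sup>2)"
  proof -
    have cos_sin_tu: "cos t * sin (t + u) = - 2 * sin t * (1 - (sin t)\<^sup>2)"
      unfolding sin_tu sin_double cos_squared_eq[symmetric] by (simp add: power2_eq_square)
    have "c\<^sup>2 * cos t * sin (t + u) - c\<^sup>2 * sin t - a\<^sup>2 * sin u
        = c\<^sup>2 * (cos t * sin (t + u)) - c\<^sup>2 * sin t - a\<^sup>2 * sin u"
      by simp
    also have "\<dots> = (a\<^sup>2 - b\<^sup>2) * (- 2 * sin t * (1 - (sin t)\<^sup>2)) - (a\<^sup>2 - b\<^sup>2) * sin t
        + a\<^sup>2 * (3 * sin t - 4 * sin t ^ 3)"
      unfolding cos_sin_tu sin_u sin_treble_sin assms(1) by (simp add: algebra_simps)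
    also have "\<dots> = sin t * (3 * b\<^sup>2 - 2 * (a\<^sup>2 + b\<^sup>2) * (sin t)\<^sup>2)"
      by (simp add: algebra_simps power2_eq_square power3_eq_cube)
    finally show ?thesis .
  qed
  ultimately show ?thesis
    by (simp add: neg_pedal_def)
qed

lemma cusp_ellipse_defect:
  fixes a b C S :: real
  assumes "a \<noteq> 0" and "b \<noteq> 0" and "S\<^sup>2 = 1 - C\<^sup>2"
  shows "a ^ 4 * b ^ 4 *
      ((C * (3 * a\<^sup>2 - 2 * (a\<^sup>2 + b\<^sup>2) * C\<^sup>2) / a)\<^sup>2 / a\<^sup>2
     + (S * (3 * b\<^sup>2 - 2 * (a\<^sup>2 + b\<^sup>2) * S\<^sup>2) / b)\<^sup>2 / b\<^sup>2 - 1)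
    = - 4 * (a\<^sup>2 - b\<^sup>2) * ((a\<^sup>2 + b\<^sup>2) * C\<^sup>2 - a\<^sup>2) ^ 3"
proof -
  have "a ^ 4 * b ^ 4 *
      ((C * (3 * a\<^sup>2 - 2 * (a\<^sup>2 + b\<^sup>2) * C\<^sup>2) / a)\<^sup>2 / a\<^sup>2
     + (S * (3 * b\<^sup>2 - 2 * (a\<^sup>2 + b\<^sup>2) * S\<^sup>2) / b)\<^sup>2 / b\<^sup>2 - 1)
    = b ^ 4 * (C * (3 * a\<^sup>2 - 2 * (a\<^sup>2 + b\<^sup>2) * C\<^sup>2))\<^sup>2
     + a ^ 4 * (S * (3 * b\<^sup>2 - 2 * (a\<^sup>2 + b\<^sup>2) * S\<^sup>2))\<^sup>2 - a ^ 4 * b ^ 4"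
    using assms(1,2) by (simp add: field_simps)
  also have "\<dots> = - 4 * (a\<^sup>2 - b\<^sup>2) * ((a\<^sup>2 + b\<^sup>2) * C\<^sup>2 - a\<^sup>2) ^ 3"
    unfolding power_mult_distrib[of S] assms(3)
    by (simp add: algebra_simps power2_eq_square power3_eq_cube power4_eq_xxxx)
  finally show ?thesis .
qed

lemma eq_sign_div_sqrt:
  fixes k z w :: real
  assumes "k > 0" and "k * z\<^sup>2 = w\<^sup>2"
  shows "\<exists>s \<in> {-1, 1}. z = s * w / sqrt k"
proof -
  have "(z * sqrt k)\<^sup>2 = w\<^sup>2"
    using assms by (simp add: power_mult_distrib mult.commute)
  then have "z * sqrt k = w \<or> z * sqrt k = - w" by (rule power2_eq_iff[THEN iffD1])
  then show ?thesis
    using assms(1) by (auto simp: field_simps)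
qed

theorem proposition6p4:
  fixes a b c u :: real and i :: nat
  assumes "a > b" and "b > 0" and "c > 0" and "c\<^sup>2 = a\<^sup>2 - b\<^sup>2"
    and "i \<in> {1, 2, 3}"
    and "neg_pedal a b c u (cusp_param u i) \<in> ellipse a b"
  shows "neg_pedal a b c u (cusp_param u i) = ellP a b (cusp_param u i)
    \<and> (\<exists>s1 s2 :: real. s1 \<in> {-1, 1} \<and> s2 \<in> {-1, 1} \<and>
         ellP a b (cusp_param u i) =
           (s1 * a\<^sup>2 / sqrt (a\<^sup>2 + b\<^sup>2), s2 * b\<^sup>2 / sqrt (a\<^sup>2 + b\<^sup>2)))"
proof -
  define t where "t = cusp_param u i"
  define k where "k = a\<^sup>2 + b\<^sup>2"
  have "a > 0" and "b\<^sup>2 < a\<^sup>2"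
    using assms(1,2) by (simp_all add: power_strict_mono)
  then have "k > 0"
    by (simp add: k_def add_pos_nonneg)
  have cusp: "neg_pedal a b c u t =
      (cos t * (3 * a\<^sup>2 - 2 * k * (cos t)\<^sup>2) / a, sin t * (3 * b\<^sup>2 - 2 * k * (sin t)\<^sup>2) / b)"
    unfolding k_def t_def by (rule neg_pedal_at_cusp[OF assms(4) cusp_param_relation])
  have "- 4 * (a\<^sup>2 - b\<^sup>2) * (k * (cos t)\<^sup>2 - a\<^sup>2) ^ 3 = 0"
    using cusp_ellipse_defect[of a b "sin t" "cos t"] assms(6) cusp \<open>a > 0\<close> assms(2)
    by (simp add: ellipse_def t_def k_def sin_squared_eq)
  then have cos_t: "k * (cos t)\<^sup>2 = a\<^sup>2"
    using \<open>b\<^sup>2 < a\<^sup>2\<close> by simp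
  then have sin_t: "k * (sin t)\<^sup>2 = b\<^sup>2"
    by (simp add: sin_squared_eq k_def right_diff_distrib)
  have "neg_pedal a b c u t = ellP a b t"
    using cusp cos_t sin_t \<open>a > 0\<close> assms(2)
    by (simp add: ellP_def field_simps power2_eq_square)
  moreover obtain s1 s2 where "s1 \<in> {-1, 1}" "cos t = s1 * a / sqrt k"
    and "s2 \<in> {-1, 1}" "sin t = s2 * b / sqrt k"
    using eq_sign_div_sqrt[OF \<open>k > 0\<close> cos_t] eq_sign_div_sqrt[OF \<open>k > 0\<close> sin_t] by blast
  ultimately show ?thesis
    unfolding t_def[symmetric] k_def[symmetric]
    by (auto simp: ellP_def power2_eq_square)
qed

end
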